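(* For every positive integer $m$, there is no $(2^{2m},m,p)$-QRA coding with $p>1/2$. That is, there do not exist $p>1/2$, $m$-qubit states $\rho_x$ for $x\in\{0,1\}^{2^{2m}}$, and POVMs $\{E^i_0,E^i_1\}$ on $\mathbb{C}^{2^m}$ for $i\in\{1,\dots,2^{2m}\}$ with $\mathrm{Tr}(E^i_{x_i}\rho_x)\ge p$ for all $x$ and all $i$.
   Context: An $(n,m,p)$-quantum random access (QRA) coding is a map assigning to each $n$-bit string $x\in\{0,1\}^n$ an $m$-qubit state $\rho_x$ (a positive semidefinite trace-one operator on $\mathbb{C}^{2^m}$) such that for every $i\in\{1,\dots,n\}$ there is a POVM $E^i=\{E^i_0,E^i_1\}$ (i.e. $E^i_0,E^i_1$ are positive semidefinite Hermitian operators on $\mathbb{C}^{2^m}$ with $E^i_0+E^i_1=I$) satisfying $\mathrm{Tr}(E^i_{x_i}\rho_x)\ge p$ for all $x\in\{0,1\}^n$, where $x_i$ is the $i$-th bit of $x$. *)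

theory Defs
  imports "Jordan_Normal_Form.Matrix" "Jordan_Normal_Form.Conjugate"
begin

definition mtrace :: "complex mat \<Rightarrow> complex" where
  "mtrace A = (\<Sum>i<dim_row A. A $$ (i, i))"

definition hermitian_mat :: "nat \<Rightarrow> complex mat \<Rightarrow> bool" where
  "hermitian_mat d A \<longleftrightarrow> A \<in> carrier_mat d d \<and>
     (\<forall>i<d. \<forall>j<d. A $$ (i, j) = cnj (A $$ (j, i)))"

definition psd_mat :: "nat \<Rightarrow> complex mat \<Rightarrow> bool" where
  "psd_mat d A \<longleftrightarrow> hermitian_mat d A \<and>
     (\<forall>v \<in> carrier_vec d. 0 \<le> Re (conjugate v \<bullet> (A *\<^sub>v v)))"

definition qstate :: "nat \<Rightarrow> complex mat \<Rightarrow> bool" where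
  "qstate m \<rho> \<longleftrightarrow> psd_mat (2 ^ m) \<rho> \<and> mtrace \<rho> = 1"

text \<open>Two-outcome POVM on C^(2^m); outcomes indexed by bool (False = 0, True = 1).\<close>
definition povm2 :: "nat \<Rightarrow> (bool \<Rightarrow> complex mat) \<Rightarrow> bool" where
  "povm2 m E \<longleftrightarrow> psd_mat (2 ^ m) (E False) \<and> psd_mat (2 ^ m) (E True) \<and>
     E False + E True = 1\<^sub>m (2 ^ m)"

text \<open>(n,m,p)-QRA coding. Bit strings x in {0,1}^n are boolean lists of length n,
  the i-th bit (i = 1..n) being x ! (i-1); indices are 0-based here.\<close>
definition qra_coding :: "nat \<Rightarrow> nat \<Rightarrow> real \<Rightarrow> bool" where
  "qra_coding n m p \<longleftrightarrow>
     (\<exists>\<rho> :: bool list \<Rightarrow> complex mat. \<exists>E :: nat \<Rightarrow> bool \<Rightarrow> complex mat.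
        (\<forall>x. length x = n \<longrightarrow> qstate m (\<rho> x)) \<and>
        (\<forall>i<n. povm2 m (E i)) \<and>
        (\<forall>x i. length x = n \<longrightarrow> i < n \<longrightarrow> Re (mtrace (E i (x ! i) * \<rho> x)) \<ge> p))"

end

(*
  Hermitian operators on C^d form a real vector space of dimension d^2 = 4^m. If a QRA coding
  had n \<ge> 4^m bits, the n effects E^i_1 together with the identity would be real-linearly
  dependent, and since the identity is nonzero the relation reads sum_i r_i E^i_1 = c I with
  some r_i \<noteq> 0. Taking expectations in rho_x gives sum_i r_i (Tr(E^i_1 rho_x) - 1/2) =
  c - (sum_i r_i)/2 for every x. When p > 1/2 the sign of Tr(E^i_1 rho_x) - 1/2 is the bit x_i,
  so choosing x_i from the sign of r_i makes the left-hand side negative for one x and positive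
  for another.
*)
theory Submission
  imports Defs "HOL-Library.Function_Algebras"
begin

lemma sum_fun_apply: "(\<Sum>a\<in>A. f a) x = (\<Sum>a\<in>A. f a x)"
  by (induction A rule: infinite_finite_induct) auto

lemma nontrivial_relation_of_repeated_vector:
  fixes v :: "'i \<Rightarrow> 'j \<Rightarrow> 'a::ring_1"
  assumes "finite I" "i \<in> I" "i' \<in> I" "i \<noteq> i'" "\<forall>j\<in>J. v i j = v i' j"
  shows "\<exists>c. (\<exists>i\<in>I. c i \<noteq> 0) \<and> (\<forall>j\<in>J. (\<Sum>k\<in>I. c k * v k j) = 0)"
proof -
  define c :: "'i \<Rightarrow> 'a" where "c k = (if k = i then 1 else if k = i' then -1 else 0)" for k
  have "(\<Sum>k\<in>I. c k * v k j) = 0" if "j \<in> J" for j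
  proof -
    have "(\<Sum>k\<in>I. c k * v k j)
        = (\<Sum>k\<in>I. (if k = i then v k j else 0) - (if k = i' then v k j else 0))"
      using assms(4) by (intro sum.cong) (auto simp: c_def)
    also have "\<dots> = v i j - v i' j"
      using assms(1-3) by (simp add: sum_subtractf)
    finally show ?thesis using assms(5) that by simp
  qed
  moreover have "c i \<noteq> 0" by (simp add: c_def)
  ultimately show ?thesis using assms(2) by blast
qed

lemma exists_nontrivial_linear_relation:
  fixes v :: "'i \<Rightarrow> 'j \<Rightarrow> 'a::field"
  assumes "finite I" "finite J" "card J < card I"
  shows "\<exists>c. (\<exists>i\<in>I. c i \<noteq> 0) \<and> (\<forall>j\<in>J. (\<Sum>i\<in>I. c i * v i j) = 0)"
proof -
  \<comment> \<open>Truncated to \<open>J\<close>, the vectors \<open>v i\<close> lie in the span of the \<open>card J\<close> unit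
    functions \<open>e j\<close> of the vector space \<open>'j \<Rightarrow> 'a\<close>.\<close>
  interpret F: vector_space "\<lambda>c (f :: 'j \<Rightarrow> 'a) j. c * f j"
    by unfold_locales (simp_all add: fun_eq_iff algebra_simps)
  define w where "w i j = (if j \<in> J then v i j else 0)" for i j
  show ?thesis
  proof (cases "inj_on w I")
    case False
    then obtain i i' where i: "i \<in> I" "i' \<in> I" "i \<noteq> i'" and "w i = w i'"
      by (auto simp: inj_on_def)
    have "v i j = v i' j" if "j \<in> J" for j
      using fun_cong[OF \<open>w i = w i'\<close>, of j] that by (simp add: w_def)
    with i show ?thesis
      by (intro nontrivial_relation_of_repeated_vector[OF assms(1)]) auto
  next
    case True
    define e :: "'j \<Rightarrow> 'j \<Rightarrow> 'a" where "e j0 j = (if j = j0 then 1 else 0)" for j0 j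
    have "(\<Sum>j\<in>J. w i j * e j x) = w i x" for i x
    proof -
      have "(\<Sum>j\<in>J. w i j * e j x) = (\<Sum>j\<in>J. if x = j then w i x else 0)"
        by (intro sum.cong) (auto simp: e_def)
      then show ?thesis by (simp add: assms(2) w_def)
    qed
    then have expansion: "w i = (\<Sum>j\<in>J. (\<lambda>j'. w i j * e j j'))" for i
      by (simp add: fun_eq_iff sum_fun_apply)
    have span: "w ` I \<subseteq> F.span (e ` J)"
    proof clarify
      fix i
      have "(\<Sum>j\<in>J. (\<lambda>j'. w i j * e j j')) \<in> F.span (e ` J)"
        by (intro F.span_sum F.span_scale F.span_base imageI)
      then show "w i \<in> F.span (e ` J)" by (subst expansion)
    qed
    have "F.dependent (w ` I)"
    proof (rule ccontr)
      assume "F.independent (w ` I)"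
      from F.independent_span_bound[OF _ this span] assms(2)
      have "card (w ` I) \<le> card (e ` J)" by auto
      also have "\<dots> \<le> card J" using assms(2) by (rule card_image_le)
      finally show False using True assms(3) by (simp add: card_image)
    qed
    then obtain u where u: "\<exists>s\<in>w ` I. u s \<noteq> 0" "(\<Sum>s\<in>w ` I. (\<lambda>j. u s * s j)) = 0"
      using F.dependent_finite assms(1) by blast
    have "(\<Sum>i\<in>I. u (w i) * v i j) = 0" if "j \<in> J" for j
    proof -
      have "(\<Sum>i\<in>I. u (w i) * v i j) = (\<Sum>s\<in>w ` I. u s * s j)"
        using that True by (simp add: sum.reindex w_def)
      also have "\<dots> = 0" using fun_cong[OF u(2), of j] by (simp add: sum_fun_apply)
      finally show ?thesis .
    qed
    moreover have "\<exists>i\<in>I. u (w i) \<noteq> 0" using u(1) by blast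
    ultimately show ?thesis by (intro exI[of _ "\<lambda>i. u (w i)"]) blast
  qed
qed

lemma real_parts_of_conjugate_relations:
  fixes c x :: "'i \<Rightarrow> complex"
  assumes "(\<Sum>i\<in>I. c i * x i) = 0" "(\<Sum>i\<in>I. cnj (c i) * x i) = 0"
  shows "(\<Sum>i\<in>I. of_real (Re (c i)) * x i) = 0" "(\<Sum>i\<in>I. of_real (Im (c i)) * x i) = 0"
proof -
  have "(\<Sum>i\<in>I. of_real (Re (c i)) * x i) = ((\<Sum>i\<in>I. c i * x i) + (\<Sum>i\<in>I. cnj (c i) * x i)) / 2"
    by (simp add: sum_divide_distrib flip: sum.distrib distrib_right) (simp add: complex_add_cnj)
  then show "(\<Sum>i\<in>I. of_real (Re (c i)) * x i) = 0" using assms by simp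
  have "2 * \<i> * (\<Sum>i\<in>I. of_real (Im (c i)) * x i) = (\<Sum>i\<in>I. (c i - cnj (c i)) * x i)"
    by (simp add: sum_distrib_left complex_diff_cnj mult_ac)
  also have "\<dots> = (\<Sum>i\<in>I. c i * x i) - (\<Sum>i\<in>I. cnj (c i) * x i)"
    by (simp add: left_diff_distrib sum_subtractf)
  finally show "(\<Sum>i\<in>I. of_real (Im (c i)) * x i) = 0" using assms by simp
qed

lemma hermitian_real_relation:
  fixes M :: "'i \<Rightarrow> complex mat" and c :: "'i \<Rightarrow> complex"
  assumes herm: "\<forall>i\<in>I. hermitian_mat d (M i)" and nontrivial: "\<exists>i\<in>I. c i \<noteq> 0"
    and rel: "\<forall>a<d. \<forall>b<d. (\<Sum>i\<in>I. c i * M i $$ (a, b)) = 0"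
  shows "\<exists>r :: 'i \<Rightarrow> real. (\<exists>i\<in>I. r i \<noteq> 0) \<and>
           (\<forall>a<d. \<forall>b<d. (\<Sum>i\<in>I. of_real (r i) * M i $$ (a, b)) = 0)"
proof -
  have conj_rel: "(\<Sum>i\<in>I. cnj (c i) * M i $$ (a, b)) = 0" if "a < d" "b < d" for a b
  proof -
    have "(\<Sum>i\<in>I. cnj (c i) * M i $$ (a, b)) = cnj (\<Sum>i\<in>I. c i * M i $$ (b, a))"
      unfolding cnj_sum complex_cnj_mult
    proof (intro sum.cong refl)
      fix i assume "i \<in> I"
      then have "M i $$ (b, a) = cnj (M i $$ (a, b))"
        using herm that unfolding hermitian_mat_def by blast
      then show "cnj (c i) * M i $$ (a, b) = cnj (c i) * cnj (M i $$ (b, a))" by simp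
    qed
    then show ?thesis using rel that by simp
  qed
  have re: "(\<Sum>i\<in>I. of_real (Re (c i)) * M i $$ (a, b)) = 0"
    and im: "(\<Sum>i\<in>I. of_real (Im (c i)) * M i $$ (a, b)) = 0" if "a < d" "b < d" for a b
    using real_parts_of_conjugate_relations[OF rel[rule_format, OF that] conj_rel[OF that]] by simp_all
  from nontrivial consider "\<exists>i\<in>I. Re (c i) \<noteq> 0" | "\<exists>i\<in>I. Im (c i) \<noteq> 0"
    using complex_eq_iff by force
  then show ?thesis
  proof cases
    case 1
    then show ?thesis using re by (intro exI[of _ "\<lambda>i. Re (c i)"]) auto
  next
    case 2
    then show ?thesis using im by (intro exI[of _ "\<lambda>i. Im (c i)"]) auto
  qed
qed

lemma mtrace_mult:
  assumes "A \<in> carrier_mat d d" "B \<in> carrier_mat d d"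
  shows "mtrace (A * B) = (\<Sum>a<d. \<Sum>b<d. A $$ (a, b) * B $$ (b, a))"
  using assms by (auto simp: mtrace_def scalar_prod_def atLeast0LessThan intro!: sum.cong)

lemma mtrace_lincomb_mult:
  assumes "\<And>i. i \<in> I \<Longrightarrow> M i \<in> carrier_mat d d" "N \<in> carrier_mat d d" "R \<in> carrier_mat d d"
    and "\<And>a b. a < d \<Longrightarrow> b < d \<Longrightarrow> (\<Sum>i\<in>I. c i * M i $$ (a, b)) = N $$ (a, b)"
  shows "(\<Sum>i\<in>I. c i * mtrace (M i * R)) = mtrace (N * R)"
proof -
  have "(\<Sum>i\<in>I. c i * mtrace (M i * R))
      = (\<Sum>i\<in>I. \<Sum>a<d. \<Sum>b<d. c i * M i $$ (a, b) * R $$ (b, a))"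
    by (intro sum.cong) (simp_all add: mtrace_mult[OF assms(1,3)] sum_distrib_left mult.assoc)
  also have "\<dots> = (\<Sum>a<d. \<Sum>b<d. (\<Sum>i\<in>I. c i * M i $$ (a, b)) * R $$ (b, a))"
    by (simp add: sum_distrib_right sum.swap[of _ I])
  also have "\<dots> = mtrace (N * R)"
    by (simp add: assms(4) mtrace_mult[OF assms(2,3)])
  finally show ?thesis .
qed

lemma mtrace_smult_one_mult:
  assumes "R \<in> carrier_mat d d"
  shows "mtrace ((k \<cdot>\<^sub>m 1\<^sub>m d) * R) = k * mtrace R"
  using assms by (simp add: mult_smult_assoc_mat[of _ d d] mtrace_def sum_distrib_left)

lemma qstate_mtrace_relation:
  assumes "qstate m \<rho>" "\<forall>i<n. A i \<in> carrier_mat (2 ^ m) (2 ^ m)"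
    and "\<forall>a<2 ^ m. \<forall>b<2 ^ m.
           (\<Sum>i<n. of_real (r i) * A i $$ (a, b)) = (of_real c \<cdot>\<^sub>m 1\<^sub>m (2 ^ m)) $$ (a, b)"
  shows "(\<Sum>i<n. r i * Re (mtrace (A i * \<rho>))) = c"
proof -
  have \<rho>: "\<rho> \<in> carrier_mat (2 ^ m) (2 ^ m)" "mtrace \<rho> = 1"
    using assms(1) unfolding qstate_def psd_mat_def hermitian_mat_def by blast+
  have "(\<Sum>i<n. of_real (r i) * mtrace (A i * \<rho>)) = mtrace ((of_real c \<cdot>\<^sub>m 1\<^sub>m (2 ^ m)) * \<rho>)"
    using assms(2,3) \<rho>(1) by (intro mtrace_lincomb_mult) auto
  also have "\<dots> = of_real c"
    by (simp add: mtrace_smult_one_mult[OF \<rho>(1)] \<rho>(2))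
  finally have "Re (\<Sum>i<n. of_real (r i) * mtrace (A i * \<rho>)) = c" by simp
  then show ?thesis by simp
qed

lemma povm2_probabilities_sum:
  assumes "povm2 m E" "qstate m \<rho>"
  shows "mtrace (E False * \<rho>) + mtrace (E True * \<rho>) = 1"
proof -
  have carrier: "E False \<in> carrier_mat (2 ^ m) (2 ^ m)" "E True \<in> carrier_mat (2 ^ m) (2 ^ m)"
    "\<rho> \<in> carrier_mat (2 ^ m) (2 ^ m)"
    and "E False + E True = 1\<^sub>m (2 ^ m)" "mtrace \<rho> = 1"
    using assms unfolding povm2_def qstate_def psd_mat_def hermitian_mat_def by blast+
  have "mtrace (E False * \<rho>) + mtrace (E True * \<rho>) = mtrace ((E False + E True) * \<rho>)"
    using carrier by (simp add: mtrace_mult[OF add_carrier_mat[OF carrier(2)] carrier(3)]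
        mtrace_mult[OF carrier(1,3)] mtrace_mult[OF carrier(2,3)] distrib_right flip: sum.distrib)
  also have "(E False + E True) * \<rho> = \<rho>"
    using carrier(3) \<open>E False + E True = 1\<^sub>m (2 ^ m)\<close> by simp
  finally show ?thesis
    using \<open>mtrace \<rho> = 1\<close> by simp
qed

lemma povm2_outcome_probability_threshold:
  assumes "povm2 m E" "qstate m \<rho>" "Re (mtrace (E b * \<rho>)) \<ge> p" "p > 1 / 2"
  shows "if b then Re (mtrace (E True * \<rho>)) > 1 / 2 else Re (mtrace (E True * \<rho>)) < 1 / 2"
  using arg_cong[where f = Re, OF povm2_probabilities_sum[OF assms(1,2)]] assms(3,4)
  by (cases b) auto

lemma exists_sign_pattern_negative_sum:
  fixes r :: "nat \<Rightarrow> real" and t :: "bool list \<Rightarrow> nat \<Rightarrow> real"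
  assumes nontrivial: "\<exists>i<n. r i \<noteq> 0"
    and sign: "\<And>x i. length x = n \<Longrightarrow> i < n \<Longrightarrow> if x ! i then t x i > \<theta> else t x i < \<theta>"
  shows "\<exists>x. length x = n \<and> (\<Sum>i<n. r i * (t x i - \<theta>)) < 0"
proof -
  define x where "x = map (\<lambda>i. r i < 0) [0..<n]"
  have len: "length x = n" by (simp add: x_def)
  have sign_x: "if r i < 0 then t x i > \<theta> else t x i < \<theta>" if "i < n" for i
    using sign[OF len that] that by (simp add: x_def)
  have "r i * (t x i - \<theta>) \<le> 0" if "i < n" for i
    using sign_x[OF that] by (auto split: if_splits simp: mult_nonpos_nonneg mult_nonneg_nonpos)
  moreover have "\<exists>i\<in>{..<n}. r i * (t x i - \<theta>) < 0"
    using nontrivial sign_x by (force split: if_splits simp: mult_neg_pos mult_pos_neg)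
  ultimately have "(\<Sum>i<n. r i * (t x i - \<theta>)) < (\<Sum>i<n. 0)"
    by (intro sum_strict_mono_ex1) auto
  then show ?thesis using len by auto
qed

lemma sign_pattern_relation_trivial:
  fixes r :: "nat \<Rightarrow> real" and t :: "bool list \<Rightarrow> nat \<Rightarrow> real"
  assumes sign: "\<And>x i. length x = n \<Longrightarrow> i < n \<Longrightarrow> if x ! i then t x i > \<theta> else t x i < \<theta>"
    and relation: "\<And>x. length x = n \<Longrightarrow> (\<Sum>i<n. r i * t x i) = C"
  shows "\<forall>i<n. r i = 0"
proof (rule ccontr)
  assume "\<not> (\<forall>i<n. r i = 0)"
  then have nontrivial: "\<exists>i<n. r i \<noteq> 0" "\<exists>i<n. - r i \<noteq> 0" by auto
  have shift: "(\<Sum>i<n. s i * (t x i - \<theta>)) = (\<Sum>i<n. s i * t x i) - \<theta> * (\<Sum>i<n. s i)"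
    for s x by (simp add: right_diff_distrib sum_subtractf sum_distrib_left mult.commute)
  obtain x where "length x = n" "(\<Sum>i<n. r i * (t x i - \<theta>)) < 0"
    using exists_sign_pattern_negative_sum[OF nontrivial(1) sign] by blast
  then have "C - \<theta> * (\<Sum>i<n. r i) < 0"
    using relation shift by simp
  moreover obtain y where "length y = n" "(\<Sum>i<n. - r i * (t y i - \<theta>)) < 0"
    using exists_sign_pattern_negative_sum[OF nontrivial(2) sign] by blast
  then have "- C + \<theta> * (\<Sum>i<n. r i) < 0"
    using relation[of y] shift[of "\<lambda>i. - r i" y] by (simp add: sum_negf)
  ultimately show False by simp
qed

lemma hermitian_affine_relation_with_identity:
  assumes herm: "\<forall>i<n. hermitian_mat d (A i)" and "0 < d" "d * d \<le> n"
  shows "\<exists>r c. (\<exists>i<n. r i \<noteq> 0) \<and>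
           (\<forall>a<d. \<forall>b<d.
              (\<Sum>i<n. of_real (r i) * A i $$ (a, b)) = (of_real c \<cdot>\<^sub>m 1\<^sub>m d) $$ (a, b))"
proof -
  define M where "M i = (if i < n then A i else - 1\<^sub>m d)" for i
  have "hermitian_mat d (- 1\<^sub>m d)"
    by (auto simp: hermitian_mat_def)
  then have herm_M: "\<forall>i\<in>{..n}. hermitian_mat d (M i)"
    using herm by (simp add: M_def)
  have "card ({..<d} \<times> {..<d}) < card {..n}"
    using \<open>d * d \<le> n\<close> by (simp add: card_cartesian_product)
  then obtain c where c: "\<exists>i\<in>{..n}. c i \<noteq> 0"
    "\<forall>j\<in>{..<d} \<times> {..<d}. (\<Sum>i\<in>{..n}. c i * M i $$ j) = 0"
    using exists_nontrivial_linear_relation[of "{..n}" "{..<d} \<times> {..<d}" "\<lambda>i. ($$) (M i)"]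
    by auto
  then obtain r where r: "\<exists>i\<in>{..n}. r i \<noteq> 0"
    "\<forall>a<d. \<forall>b<d. (\<Sum>i\<in>{..n}. of_real (r i) * M i $$ (a, b)) = 0"
    using hermitian_real_relation[OF herm_M c(1)] by auto
  have relation: "(\<Sum>i<n. of_real (r i) * A i $$ (a, b)) = (of_real (r n) \<cdot>\<^sub>m 1\<^sub>m d) $$ (a, b)"
    if "a < d" "b < d" for a b
  proof -
    have "(\<Sum>i<n. of_real (r i) * M i $$ (a, b)) = (\<Sum>i<n. of_real (r i) * A i $$ (a, b))"
      by (intro sum.cong) (simp_all add: M_def)
    then show ?thesis
      using r(2) that by (simp add: M_def flip: lessThan_Suc_atMost)
  qed
  have "\<exists>i<n. r i \<noteq> 0"
  proof (rule ccontr)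
    assume "\<not> (\<exists>i<n. r i \<noteq> 0)"
    with r(1) have "r n \<noteq> 0" by (auto simp: le_less)
    moreover have "(of_real (r n) \<cdot>\<^sub>m 1\<^sub>m d) $$ (0, 0) = 0"
      using relation[of 0 0] \<open>\<not> (\<exists>i<n. r i \<noteq> 0)\<close> \<open>0 < d\<close> by simp
    ultimately show False using \<open>0 < d\<close> by simp
  qed
  with relation show ?thesis by blast
qed

theorem qra_coding_length_bound:
  assumes "qra_coding n m p" "p > 1 / 2"
  shows "n < 4 ^ m"
proof (rule ccontr)
  assume "\<not> n < 4 ^ m"
  moreover have "(4 :: nat) ^ m = 2 ^ m * 2 ^ m"
    by (simp add: power_mult_distrib[symmetric])
  ultimately have "2 ^ m * 2 ^ m \<le> n" by simp
  obtain \<rho> E where states: "\<And>x. length x = n \<Longrightarrow> qstate m (\<rho> x)"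
    and povms: "\<And>i. i < n \<Longrightarrow> povm2 m (E i)"
    and success: "\<And>x i. length x = n \<Longrightarrow> i < n \<Longrightarrow> Re (mtrace (E i (x ! i) * \<rho> x)) \<ge> p"
    using assms(1) unfolding qra_coding_def by blast
  have herm: "\<forall>i<n. hermitian_mat (2 ^ m) (E i True)"
    using povms unfolding povm2_def psd_mat_def by blast
  then have carrier: "\<forall>i<n. E i True \<in> carrier_mat (2 ^ m) (2 ^ m)"
    unfolding hermitian_mat_def by blast
  obtain r c where nontrivial: "\<exists>i<n. r i \<noteq> 0" and relation:
    "\<forall>a<2 ^ m. \<forall>b<2 ^ m.
       (\<Sum>i<n. of_real (r i) * E i True $$ (a, b)) = (of_real c \<cdot>\<^sub>m 1\<^sub>m (2 ^ m)) $$ (a, b)"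
    using hermitian_affine_relation_with_identity[OF herm _ \<open>2 ^ m * 2 ^ m \<le> n\<close>] by auto
  have "\<forall>i<n. r i = 0"
  proof (rule sign_pattern_relation_trivial)
    fix x :: "bool list" and i assume "length x = n" "i < n"
    show "if x ! i then Re (mtrace (E i True * \<rho> x)) > 1 / 2
          else Re (mtrace (E i True * \<rho> x)) < 1 / 2"
      by (rule povm2_outcome_probability_threshold[OF povms states success])
        (use assms(2) \<open>length x = n\<close> \<open>i < n\<close> in auto)
  next
    fix x :: "bool list" assume "length x = n"
    show "(\<Sum>i<n. r i * Re (mtrace (E i True * \<rho> x))) = c"
      by (rule qstate_mtrace_relation[OF states carrier relation]) fact
  qed
  with nontrivial show False by blast
qed

theorem theorem2:
  fixes m :: nat
  assumes "m \<ge> 1"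
  shows "\<not> (\<exists>p :: real. p > 1 / 2 \<and> qra_coding (2 ^ (2 * m)) m p)"
proof
  assume "\<exists>p :: real. p > 1 / 2 \<and> qra_coding (2 ^ (2 * m)) m p"
  then have "2 ^ (2 * m) < (4 :: nat) ^ m"
    using qra_coding_length_bound by blast
  then show False by (simp add: power_mult)
qed

end
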